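(* Let $q$ be a power of the odd prime $p$, let $d$ be a positive integer such that $f(x)=x^d$ is a planar function on $\mathbb F_{q^2}$. For $c\in\mathbb F_{q^2}^*$ and $\sigma\in\mathrm{Gal}(\mathbb F_{q^2}/\mathbb F_p)$ define $\gamma_{c,\sigma}$ on the points of $\Pi(f)$ by $(x,y)\mapsto(\sigma(cx),\sigma(c^dy))$, $(a)\mapsto(\sigma(ca))$ for $a\in\mathbb F_{q^2}$, and $(\infty)\mapsto(\infty)$. Then each $\gamma_{c,\sigma}$ is a collineation of $\Pi(f)$, and all $\gamma_{c,\sigma}$ together form a group $\Gamma$ of collineations of $\Pi(f)$. Moreover, for any $\theta,\theta'\in\mathbb F_{q^2}^*$ such that $\theta^{q+1}$ and $\theta'^{q+1}$ are nonsquares in $\mathbb F_q$, the sets $\mathcal U_\theta$ and $\mathcal U_{\theta'}$ are equivalent, i.e.\ some collineation of $\Pi(f)$ maps $\mathcal U_\theta$ onto $\mathcal U_{\theta'}$.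
   Context: A function $f:\mathbb F_{q^2}\to\mathbb F_{q^2}$ is planar if for every $a\neq0$ the map $x\mapsto f(x+a)-f(x)$ is a bijection. For planar $f$, $\Pi(f)$ is the projective plane with points $(x,y)\in\mathbb F_{q^2}^2$ and $(a)$ for $a\in\mathbb F_{q^2}\cup\{\infty\}$, and lines $L_{a,b}=\{(x,f(x+a)-b):x\in\mathbb F_{q^2}\}\cup\{(a)\}$, $N_a=\{(a,y):y\in\mathbb F_{q^2}\}\cup\{(\infty)\}$ ($a,b\in\mathbb F_{q^2}$), $L_\infty=\{(a):a\in\mathbb F_{q^2}\cup\{\infty\}\}$, incidence being membership. A collineation is a bijection on points mapping lines onto lines. For $\theta\in\mathbb F_{q^2}^*$, $\mathcal U_\theta:=\{(x,t\theta):x\in\mathbb F_{q^2},t\in\mathbb F_q\}\cup\{(\infty)\}$. *)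

theory Defs
  imports Main "HOL-Computational_Algebra.Primes"
begin

text \<open>Points of the plane Pi(f): affine points Aff x y, and points at infinity
  Dir (Some a) = (a) for a in the field and Dir None = (infinity).\<close>
datatype 'a point = Aff 'a 'a | Dir "'a option"

definition planar :: "('a::field \<Rightarrow> 'a) \<Rightarrow> bool" where
  "planar f \<longleftrightarrow> (\<forall>a. a \<noteq> 0 \<longrightarrow> bij (\<lambda>x. f (x + a) - f x))"

definition lineL :: "('a::field \<Rightarrow> 'a) \<Rightarrow> 'a \<Rightarrow> 'a \<Rightarrow> 'a point set" where
  "lineL f a b = {Aff x (f (x + a) - b) | x. True} \<union> {Dir (Some a)}"

definition lineN :: "'a \<Rightarrow> 'a point set" where
  "lineN a = {Aff a y | y. True} \<union> {Dir None}"

definition lineInf :: "'a point set" where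
  "lineInf = range Dir"

definition lines :: "('a::field \<Rightarrow> 'a) \<Rightarrow> 'a point set set" where
  "lines f = {lineL f a b | a b. True} \<union> {lineN a | a. True} \<union> {lineInf}"

definition collineation :: "('a::field \<Rightarrow> 'a) \<Rightarrow> ('a point \<Rightarrow> 'a point) \<Rightarrow> bool" where
  "collineation f g \<longleftrightarrow> bij g \<and> (\<forall>l \<in> lines f. g ` l \<in> lines f)"

text \<open>Field automorphisms of 'a (every one fixes the prime field, so for 'a = GF(q^2)
  these form Gal(GF(q^2)/GF(p))).\<close>
definition field_auts :: "('a::field \<Rightarrow> 'a) set" where
  "field_auts = {\<sigma>. bij \<sigma> \<and> (\<forall>x y. \<sigma> (x + y) = \<sigma> x + \<sigma> y) \<and> (\<forall>x y. \<sigma> (x * y) = \<sigma> x * \<sigma> y)}"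

definition gamma :: "nat \<Rightarrow> 'a::field \<Rightarrow> ('a \<Rightarrow> 'a) \<Rightarrow> 'a point \<Rightarrow> 'a point" where
  "gamma d c \<sigma> P = (case P of
      Aff x y \<Rightarrow> Aff (\<sigma> (c * x)) (\<sigma> (c ^ d * y))
    | Dir (Some a) \<Rightarrow> Dir (Some (\<sigma> (c * a)))
    | Dir None \<Rightarrow> Dir None)"

definition Gamma :: "nat \<Rightarrow> ('a::field point \<Rightarrow> 'a point) set" where
  "Gamma d = {gamma d c \<sigma> | c \<sigma>. c \<noteq> 0 \<and> \<sigma> \<in> field_auts}"

text \<open>The subfield GF(q) of GF(q^2).\<close>
definition subfield_q :: "nat \<Rightarrow> 'a::field set" where
  "subfield_q q = {x. x ^ q = x}"

definition nonsquare_in :: "'a::field set \<Rightarrow> 'a \<Rightarrow> bool" where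
  "nonsquare_in K t \<longleftrightarrow> t \<in> K \<and> \<not> (\<exists>s\<in>K. s ^ 2 = t)"

definition U_set :: "nat \<Rightarrow> 'a::field \<Rightarrow> 'a point set" where
  "U_set q \<theta> = {Aff x (t * \<theta>) | x t. t \<in> subfield_q q} \<union> {Dir None}"

end

theory Submission
  imports Defs "HOL-Computational_Algebra.Polynomial" "HOL-Library.Cardinality"
begin

text \<open>
  Each \<open>gamma d c \<sigma>\<close> is semilinear: it maps \<open>L(a,b)\<close> into \<open>L(\<sigma>(c a), \<sigma>(c^d b))\<close>, \<open>N(a)\<close>
  into \<open>N(\<sigma>(c a))\<close> and the line at infinity into itself, and \<open>gamma d (\<sigma>(1/c)) (inv \<sigma>)\<close> is its
  inverse, so these inclusions are equalities. Together with
  \<open>gamma d (\<tau> a) \<sigma> \<circ> gamma d b \<tau> = gamma d (a b) (\<sigma> \<circ> \<tau>)\<close> this gives the group of collineations.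

  Planarity of \<open>x^d\<close> leaves only \<open>\<plusminus>1\<close> as \<open>d\<close>-th roots of unity, so \<open>d\<close> is even and \<open>x \<mapsto> x^d\<close> is
  at most two-to-one on the nonzero elements; by counting, its nonzero values are exactly the
  squares, i.e. the roots of \<open>z^((q^2-1)/2) = 1\<close>. The norm \<open>z^(q+1)\<close> of a square is a square in
  \<open>GF(q)\<close>, so \<open>\<theta>\<close> and \<open>\<theta>'\<close> are nonsquares, \<open>\<theta>'/\<theta> = c^d\<close> for some \<open>c\<close>, and \<open>gamma d c id\<close> maps
  \<open>U(\<theta>)\<close> onto \<open>U(\<theta>')\<close>.
\<close>

lemma field_autsD:
  assumes "\<sigma> \<in> field_auts"
  shows "\<sigma> (x + y) = \<sigma> x + \<sigma> y" "\<sigma> (x * y) = \<sigma> x * \<sigma> y" "bij \<sigma>"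
  using assms by (auto simp: field_auts_def)

lemma field_aut_0:
  assumes "\<sigma> \<in> field_auts" shows "\<sigma> (0::'a::field) = 0"
  using field_autsD(1)[OF assms, of 0 0] by (metis add.right_neutral add_left_cancel)

lemma field_aut_1:
  assumes "\<sigma> \<in> field_auts" shows "\<sigma> (1::'a::field) = 1"
proof -
  obtain y where "\<sigma> y = 1"
    using field_autsD(3)[OF assms] by (metis bij_pointE)
  then show ?thesis
    using field_autsD(2)[OF assms, of 1 y] by simp
qed

lemma field_aut_diff:
  assumes "\<sigma> \<in> field_auts" shows "\<sigma> (x - y) = \<sigma> x - \<sigma> (y::'a::field)"
  using field_autsD(1)[OF assms, of "x - y" y] by (simp add: algebra_simps)

lemma field_aut_power:
  assumes "\<sigma> \<in> field_auts" shows "\<sigma> ((x::'a::field) ^ n) = \<sigma> x ^ n"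
  by (induction n) (simp_all add: field_aut_1[OF assms] field_autsD(2)[OF assms])

lemma field_aut_eq_0_iff:
  assumes "\<sigma> \<in> field_auts" shows "\<sigma> x = 0 \<longleftrightarrow> (x::'a::field) = 0"
  using field_autsD(3)[OF assms] field_aut_0[OF assms] by (metis bij_is_inj injD)

lemma id_field_aut: "id \<in> field_auts"
  by (simp add: field_auts_def)

lemma comp_field_aut:
  assumes "\<sigma> \<in> field_auts" "\<tau> \<in> field_auts" shows "\<sigma> \<circ> \<tau> \<in> field_auts"
  using assms by (auto simp: field_auts_def bij_comp)

lemma inv_field_aut:
  assumes "\<sigma> \<in> field_auts" shows "inv \<sigma> \<in> field_auts"
proof -
  have bij: "bij \<sigma>" by (rule field_autsD(3)[OF assms])
  then have \<sigma>_inv: "\<sigma> (inv \<sigma> z) = z" for z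
    by (simp add: bij_is_surj surj_f_inv_f)
  have "inv \<sigma> (x + y) = inv \<sigma> x + inv \<sigma> y" for x y
    using field_autsD(1)[OF assms, of "inv \<sigma> x" "inv \<sigma> y"] bij \<sigma>_inv by (metis bij_inv_eq_iff)
  moreover have "inv \<sigma> (x * y) = inv \<sigma> x * inv \<sigma> y" for x y
    using field_autsD(2)[OF assms, of "inv \<sigma> x" "inv \<sigma> y"] bij \<sigma>_inv by (metis bij_inv_eq_iff)
  ultimately show ?thesis
    using bij by (simp add: field_auts_def bij_imp_bij_inv)
qed

lemma gamma_comp:
  assumes "\<tau> \<in> field_auts"
  shows "gamma d (\<tau> a) \<sigma> \<circ> gamma d b \<tau> = gamma d (a * b) (\<sigma> \<circ> \<tau>)"
proof
  fix P :: "'a::field point"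
  show "(gamma d (\<tau> a) \<sigma> \<circ> gamma d b \<tau>) P = gamma d (a * b) (\<sigma> \<circ> \<tau>) P"
    by (cases P) (auto simp: gamma_def field_autsD(2)[OF assms] field_aut_power[OF assms]
        power_mult_distrib mult.assoc split: option.splits)
qed

lemma gamma_1_id: "gamma d 1 id = id"
proof
  fix P :: "'a::field point"
  show "gamma d 1 id P = id P"
    by (cases P) (auto simp: gamma_def split: option.splits)
qed

lemma gamma_inverse:
  assumes \<sigma>: "\<sigma> \<in> field_auts" and "(c::'a::field) \<noteq> 0"
  shows "gamma d c \<sigma> \<circ> gamma d (\<sigma> (inverse c)) (inv \<sigma>) = id"
    and "gamma d (\<sigma> (inverse c)) (inv \<sigma>) \<circ> gamma d c \<sigma> = id"
proof -
  have bij: "bij \<sigma>" by (rule field_autsD(3)[OF \<sigma>])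
  have "gamma d (inv \<sigma> (\<sigma> c)) \<sigma> \<circ> gamma d (\<sigma> (inverse c)) (inv \<sigma>)
      = gamma d (\<sigma> c * \<sigma> (inverse c)) (\<sigma> \<circ> inv \<sigma>)"
    by (metis gamma_comp inv_field_aut \<sigma> bij bij_inv_eq_iff)
  then show "gamma d c \<sigma> \<circ> gamma d (\<sigma> (inverse c)) (inv \<sigma>) = id"
    using assms bij
    by (simp add: field_autsD(2)[symmetric] field_aut_1 bij_is_inj bij_is_surj surj_iff[THEN iffD1] gamma_1_id)
  have "gamma d (\<sigma> (inverse c)) (inv \<sigma>) \<circ> gamma d c \<sigma> = gamma d (inverse c * c) (inv \<sigma> \<circ> \<sigma>)"
    by (rule gamma_comp[OF \<sigma>])
  then show "gamma d (\<sigma> (inverse c)) (inv \<sigma>) \<circ> gamma d c \<sigma> = id"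
    using assms bij by (simp add: bij_is_inj gamma_1_id)
qed

lemma bij_gamma:
  assumes "\<sigma> \<in> field_auts" and "(c::'a::field) \<noteq> 0"
  shows "bij (gamma d c \<sigma>)"
  using gamma_inverse[OF assms] by (metis o_bij)

lemma inv_gamma:
  assumes "\<sigma> \<in> field_auts" and "(c::'a::field) \<noteq> 0"
  shows "inv (gamma d c \<sigma>) = gamma d (\<sigma> (inverse c)) (inv \<sigma>)"
  using gamma_inverse[OF assms] by (metis inv_unique_comp)

lemma gamma_image_lineL_subset:
  assumes \<sigma>: "\<sigma> \<in> field_auts"
  shows "gamma d c \<sigma> ` lineL (\<lambda>x::'a::field. x ^ d) a b
    \<subseteq> lineL (\<lambda>x. x ^ d) (\<sigma> (c * a)) (\<sigma> (c ^ d * b))"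
proof -
  have "gamma d c \<sigma> (Aff x ((x + a) ^ d - b))
      = Aff (\<sigma> (c * x)) ((\<sigma> (c * x) + \<sigma> (c * a)) ^ d - \<sigma> (c ^ d * b))" for x
  proof -
    have "c ^ d * ((x + a) ^ d - b) = (c * x + c * a) ^ d - c ^ d * b"
      by (simp add: right_diff_distrib power_mult_distrib[symmetric] distrib_left)
    then show ?thesis
      by (simp add: gamma_def field_aut_diff[OF \<sigma>] field_aut_power[OF \<sigma>] field_autsD(1)[OF \<sigma>])
  qed
  then show ?thesis
    by (auto simp: lineL_def gamma_def)
qed

lemma gamma_image_lineN_subset: "gamma d c \<sigma> ` lineN a \<subseteq> lineN (\<sigma> (c * a))"
  by (auto simp: lineN_def gamma_def)

lemma gamma_image_lineInf_subset: "gamma d c \<sigma> ` lineInf \<subseteq> lineInf"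
  by (auto simp: lineInf_def gamma_def split: option.splits)

lemma image_eq_if_right_inverse:
  assumes "g \<circ> h = id" "g ` A \<subseteq> B" "h ` B \<subseteq> A"
  shows "g ` A = B"
proof
  have "B = g ` h ` B" using assms(1) by (simp add: image_comp)
  also have "\<dots> \<subseteq> g ` A" using assms(3) by blast
  finally show "B \<subseteq> g ` A" .
qed (fact assms(2))

lemma gamma_collineation:
  assumes \<sigma>: "\<sigma> \<in> field_auts" and c: "(c::'a::field) \<noteq> 0"
  shows "collineation (\<lambda>x::'a. x ^ d) (gamma d c \<sigma>)"
proof -
  let ?g = "gamma d c \<sigma>" and ?h = "gamma d (\<sigma> (inverse c)) (inv \<sigma>)"
  note inverse = gamma_inverse[OF \<sigma> c, of d]
  have h_g: "?h (?g P) = P" for P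
    using inverse(2) by (metis comp_apply id_apply)
  \<comment> \<open>the parameters of the line that the inverse maps the image line back to\<close>
  have a: "inv \<sigma> (\<sigma> (inverse c) * \<sigma> (c * a)) = a" for a
    using h_g[of "Dir (Some a)"] by (simp add: gamma_def)
  have b: "inv \<sigma> (\<sigma> (inverse c) ^ d * \<sigma> (c ^ d * b)) = b" for b
    using h_g[of "Aff 0 b"] by (simp add: gamma_def)
  have "?g ` l \<in> lines (\<lambda>x::'a. x ^ d)" if "l \<in> lines (\<lambda>x::'a. x ^ d)" for l
  proof -
    from that consider (L) a b where "l = lineL (\<lambda>x::'a. x ^ d) a b" | (N) a where "l = lineN a"
      | (Inf) "l = lineInf"
      by (auto simp: lines_def)
    then show ?thesis
    proof cases
      case L
      have "?g ` l = lineL (\<lambda>x. x ^ d) (\<sigma> (c * a)) (\<sigma> (c ^ d * b))"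
        unfolding L using gamma_image_lineL_subset[OF inv_field_aut[OF \<sigma>], of d "\<sigma> (inverse c)" "\<sigma> (c * a)" "\<sigma> (c ^ d * b)"]
        by (intro image_eq_if_right_inverse[OF inverse(1) gamma_image_lineL_subset[OF \<sigma>]]) (simp add: a b)
      then show ?thesis by (auto simp: lines_def)
    next
      case N
      have "?g ` l = lineN (\<sigma> (c * a))"
        unfolding N using gamma_image_lineN_subset[of d "\<sigma> (inverse c)" "inv \<sigma>" "\<sigma> (c * a)"]
        by (intro image_eq_if_right_inverse[OF inverse(1) gamma_image_lineN_subset]) (simp add: a)
      then show ?thesis by (auto simp: lines_def)
    next
      case Inf
      have "?g ` l = lineInf"
        unfolding Inf by (rule image_eq_if_right_inverse[OF inverse(1) gamma_image_lineInf_subset gamma_image_lineInf_subset])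
      then show ?thesis by (auto simp: lines_def)
    qed
  qed
  then show ?thesis
    using bij_gamma[OF \<sigma> c] by (simp add: collineation_def)
qed

lemma id_in_Gamma: "id \<in> Gamma d"
proof -
  have "gamma d (1::'a::field) id \<in> Gamma d"
    unfolding Gamma_def using id_field_aut one_neq_zero by blast
  then show ?thesis
    by (simp add: gamma_1_id)
qed

lemma Gamma_comp_closed:
  assumes "g \<in> Gamma d" and "h \<in> Gamma d"
  shows "g \<circ> h \<in> (Gamma d :: ('a::field point \<Rightarrow> 'a point) set)"
proof -
  obtain c \<sigma> c' \<tau> where g: "g = gamma d c \<sigma>" "c \<noteq> 0" "\<sigma> \<in> field_auts"
    and h: "h = gamma d c' \<tau>" "c' \<noteq> 0" "\<tau> \<in> field_auts"
    using assms by (auto simp: Gamma_def)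
  have "\<tau> (inv \<tau> c) = c"
    using field_autsD(3)[OF h(3)] by (simp add: bij_is_surj surj_f_inv_f)
  then have "g \<circ> h = gamma d (inv \<tau> c * c') (\<sigma> \<circ> \<tau>)"
    using gamma_comp[OF h(3), of d "inv \<tau> c" \<sigma> c'] g(1) h(1) by simp
  moreover have "inv \<tau> c * c' \<noteq> 0"
    using field_aut_eq_0_iff[OF inv_field_aut[OF h(3)]] g(2) h(2) by simp
  ultimately show ?thesis
    using comp_field_aut[OF g(3) h(3)] unfolding Gamma_def by blast
qed

lemma Gamma_inv_closed:
  assumes "g \<in> Gamma d"
  shows "bij g \<and> inv g \<in> (Gamma d :: ('a::field point \<Rightarrow> 'a point) set)"
proof -
  obtain c \<sigma> where g: "g = gamma d c \<sigma>" "c \<noteq> 0" "\<sigma> \<in> field_auts"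
    using assms by (auto simp: Gamma_def)
  have "\<sigma> (inverse c) \<noteq> 0"
    using field_aut_eq_0_iff[OF g(3)] g(2) by simp
  then show ?thesis
    using g bij_gamma inv_gamma inv_field_aut unfolding Gamma_def by blast
qed

lemma gamma_image_U_set:
  assumes "(c::'a::field) \<noteq> 0"
  shows "gamma d c id ` U_set q \<theta> = U_set q (c ^ d * \<theta>)"
proof
  have "gamma d c id (Aff x (t * \<theta>)) = Aff (c * x) (t * (c ^ d * \<theta>))" for x t
    by (simp add: gamma_def algebra_simps)
  then show "gamma d c id ` U_set q \<theta> \<subseteq> U_set q (c ^ d * \<theta>)"
    by (auto simp: U_set_def gamma_def)
  have "Aff x (t * (c ^ d * \<theta>)) = gamma d c id (Aff (x / c) (t * \<theta>))" for x t
    using assms by (simp add: gamma_def algebra_simps)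
  moreover have "Dir None = gamma d c id (Dir None)"
    by (simp add: gamma_def)
  ultimately show "U_set q (c ^ d * \<theta>) \<subseteq> gamma d c id ` U_set q \<theta>"
    unfolding U_set_def by blast
qed

lemma card_roots_of_unity_le:
  assumes "m \<ge> 1"
  shows "card {x::'a::idom. x ^ m = 1} \<le> m"
proof -
  let ?p = "monom (1::'a) m - 1"
  have "coeff ?p m = 1"
    using assms by (simp add: coeff_monom)
  then have "?p \<noteq> 0"
    by (metis coeff_0 zero_neq_one)
  have "{x::'a. x ^ m = 1} = {x. poly ?p x = 0}"
    by (simp add: poly_monom)
  also have "card \<dots> \<le> degree ?p"
    by (rule card_poly_roots_bound) fact
  also have "degree ?p \<le> m"
    by (intro degree_diff_le) (auto simp: degree_monom_le)
  finally show ?thesis .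
qed

lemma power_card_minus_one_eq_1:
  fixes x :: "'a::{field,finite}"
  assumes "x \<noteq> 0"
  shows "x ^ (CARD('a) - 1) = 1"
proof -
  let ?S = "{y::'a. y \<noteq> 0}"
  have "inj_on ((*) x) ?S"
    using assms by (auto simp: inj_on_def)
  moreover have "(*) x ` ?S = ?S"
  proof
    show "?S \<subseteq> (*) x ` ?S"
    proof
      fix z assume "z \<in> ?S"
      then have "z = x * (z / x)" "z / x \<in> ?S"
        using assms by auto
      then show "z \<in> (*) x ` ?S" by blast
    qed
  qed (use assms in auto)
  ultimately have "prod id ?S = (\<Prod>y\<in>?S. x * y)"
    using prod.reindex[of "(*) x" ?S id] by simp
  also have "\<dots> = x ^ card ?S * prod id ?S"
    by (simp add: prod.distrib)
  finally have "prod id ?S = x ^ card ?S * prod id ?S" .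
  moreover have "prod id ?S \<noteq> 0"
    by simp
  ultimately have "x ^ card ?S = 1"
    by (metis mult_cancel_right2)
  moreover have "?S = UNIV - {0}"
    by auto
  then have "card ?S = CARD('a) - 1"
    by (simp add: card_Diff_singleton)
  ultimately show ?thesis
    by simp
qed

lemma power_card_eq_self:
  fixes x :: "'a::{field,finite}"
  shows "x ^ CARD('a) = x"
proof (cases "x = 0")
  case False
  have "CARD('a) = Suc (CARD('a) - 1)"
    using card_gt_0_iff[of "UNIV :: 'a set"] by simp
  then have "x ^ CARD('a) = x * x ^ (CARD('a) - 1)"
    by (metis power_Suc)
  also have "\<dots> = x"
    using power_card_minus_one_eq_1[OF False] by simp
  finally show ?thesis .
qed simp

lemma planar_power_nontrivial_root_unique:
  fixes u v :: "'a::field"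
  assumes "planar (\<lambda>x::'a. x ^ d)"
    and "u ^ d = 1" "u \<noteq> 1" and "v ^ d = 1" "v \<noteq> 1"
  shows "u = v"
proof -
  let ?D = "\<lambda>x::'a. (x + 1) ^ d - x ^ d"
  \<comment> \<open>a nontrivial root w gives the zero 1/(w - 1) of the injective difference map\<close>
  have zero: "?D (inverse (w - 1)) = 0" if "w ^ d = 1" "w \<noteq> 1" for w :: 'a
  proof -
    have "inverse (w - 1) + 1 = w / (w - 1)"
      using that(2) by (simp add: field_simps)
    then have "(inverse (w - 1) + 1) ^ d = w ^ d / (w - 1) ^ d"
      by (simp add: power_divide)
    also have "\<dots> = inverse ((w - 1) ^ d)"
      using that(1) by (simp add: inverse_eq_divide)
    also have "\<dots> = inverse (w - 1) ^ d"
      by (rule power_inverse[symmetric])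
    finally show ?thesis by simp
  qed
  have "bij ?D"
    using assms(1) by (simp add: planar_def)
  then have "inverse (u - 1) = inverse (v - 1)"
    by (rule injD[OF bij_is_inj]) (simp add: zero assms)
  then show ?thesis by simp
qed

lemma planar_power_nontrivial_root_exists:
  assumes "planar (\<lambda>x::'a::field. x ^ d)" and "d > 0"
  shows "\<exists>u::'a. u ^ d = 1 \<and> u \<noteq> 1"
proof -
  have "bij (\<lambda>x::'a. (x + 1) ^ d - x ^ d)"
    using assms(1) by (simp add: planar_def)
  then obtain x :: 'a where "0 = (x + 1) ^ d - x ^ d"
    by (blast dest: bij_is_surj)
  then have x: "(x + 1) ^ d = x ^ d"
    by simp
  have "x \<noteq> 0"
    using x assms(2) by (auto simp: zero_power)
  then have "((x + 1) / x) ^ d = 1" and "(x + 1) / x \<noteq> 1"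
    using x by (simp_all add: power_divide divide_eq_eq)
  then show ?thesis by blast
qed

lemma planar_power_roots_of_unity:
  assumes "planar (\<lambda>x::'a::field. x ^ d)" and "d > 0"
  shows "even d" and "u ^ d = 1 \<longleftrightarrow> u = 1 \<or> u = (-1::'a)"
proof -
  obtain u0 :: 'a where u0: "u0 ^ d = 1" "u0 \<noteq> 1"
    using planar_power_nontrivial_root_exists[OF assms] by blast
  have "inverse u0 ^ d = 1" "inverse u0 \<noteq> 1"
    using u0 by (simp_all add: power_inverse)
  then have "inverse u0 = u0"
    using planar_power_nontrivial_root_unique[OF assms(1)] u0 by blast
  moreover have "u0 \<noteq> 0"
    using u0(1) assms(2) by (auto simp: zero_power)
  ultimately have "u0 ^ 2 = 1"
    by (metis power2_eq_square right_inverse)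
  then have minus_one: "u0 = -1"
    using u0(2) by (simp add: power2_eq_1_iff)
  with u0 show "even d"
    by (metis neg_one_odd_power)
  show "u ^ d = 1 \<longleftrightarrow> u = 1 \<or> u = -1"
    using planar_power_nontrivial_root_unique[OF assms(1) _ _ u0] minus_one u0 by auto
qed

lemma card_nonzero_powers_ge:
  assumes "planar (\<lambda>x::'a::{field,finite}. x ^ d)" and "d > 0"
  shows "CARD('a) - 1 \<le> 2 * card ((\<lambda>x::'a. x ^ d) ` {x. x \<noteq> 0})"
proof -
  let ?H = "(\<lambda>x::'a. x ^ d) ` {x. x \<noteq> 0}"
  \<comment> \<open>the only d-th roots of unity are 1 and -1, so every fibre has at most two points\<close>
  have fibre: "card {x::'a. x ^ d = y} \<le> 2" if y: "y \<in> ?H" for y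
  proof -
    obtain x0 where x0: "x0 \<noteq> 0" "y = x0 ^ d"
      using y by blast
    have "{x. x ^ d = y} \<subseteq> {x0, - x0}"
    proof
      fix x assume "x \<in> {x. x ^ d = y}"
      then have "(x / x0) ^ d = 1"
        using x0 by (simp add: power_divide)
      then show "x \<in> {x0, - x0}"
        using x0(1) planar_power_roots_of_unity(2)[OF assms] by (auto simp: divide_eq_eq)
    qed
    then have "card {x. x ^ d = y} \<le> card {x0, - x0}"
      by (intro card_mono) auto
    also have "\<dots> \<le> 2"
      by (simp add: card_insert_if)
    finally show ?thesis .
  qed
  have "{x::'a. x \<noteq> 0} = UNIV - {0}"
    by auto
  then have "CARD('a) - 1 = card {x::'a. x \<noteq> 0}"
    by (simp add: card_Diff_singleton)
  also have "\<dots> \<le> card (\<Union>y\<in>?H. {x. x ^ d = y})"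
    by (intro card_mono) auto
  also have "\<dots> \<le> (\<Sum>y\<in>?H. card {x. x ^ d = y})"
    by (rule card_UN_le) simp
  also have "\<dots> \<le> card ?H * 2"
    using sum_bounded_above[of ?H "\<lambda>y. card {x. x ^ d = y}" 2] fibre by simp
  finally show ?thesis
    by simp
qed

lemma planar_power_range_iff:
  fixes z :: "'a::{field,finite}"
  assumes "planar (\<lambda>x::'a. x ^ d)" and "d > 0" and "odd CARD('a)" and "z \<noteq> 0"
  shows "(\<exists>x. x ^ d = z) \<longleftrightarrow> z ^ ((CARD('a) - 1) div 2) = 1"
proof -
  define M where "M = (CARD('a) - 1) div 2"
  let ?H = "(\<lambda>x::'a. x ^ d) ` {x. x \<noteq> 0}" and ?R = "{y::'a. y ^ M = 1}"
  have card_eq: "CARD('a) - 1 = 2 * M"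
    using assms(3) unfolding M_def by presburger
  obtain k where k: "d = 2 * k"
    using planar_power_roots_of_unity(1)[OF assms(1,2)] by (rule evenE)
  \<comment> \<open>the nonzero d-th powers are squares, hence roots of y^M = 1, and there are at least M of them\<close>
  have "?H \<subseteq> ?R"
  proof
    fix y assume "y \<in> ?H"
    then obtain x where "x \<noteq> 0" "y = x ^ d"
      by blast
    then have "y ^ M = (x ^ (2 * M)) ^ k"
      by (simp add: k power_mult[symmetric] ac_simps)
    also have "x ^ (2 * M) = 1"
      by (simp only: card_eq[symmetric] power_card_minus_one_eq_1[OF \<open>x \<noteq> 0\<close>])
    finally show "y \<in> ?R"
      by simp
  qed
  moreover have "card ?R \<le> card ?H"
  proof -
    have "card {0::'a, 1} \<le> CARD('a)"
      by (rule card_mono) auto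
    then have "M \<ge> 1"
      using card_eq by simp
    then have "card ?R \<le> M"
      by (rule card_roots_of_unity_le)
    then show ?thesis
      using card_nonzero_powers_ge[OF assms(1,2)] card_eq by simp
  qed
  ultimately have "?H = ?R"
    by (intro card_seteq) auto
  moreover have "(\<exists>x. x ^ d = z) \<longleftrightarrow> z \<in> ?H"
    using assms(2,4) by (auto simp: zero_power)
  ultimately show ?thesis
    by (simp add: M_def)
qed

lemma norm_of_square_not_nonsquare:
  fixes w :: "'a::{field,finite}"
  assumes "CARD('a) = q ^ 2"
  shows "\<not> nonsquare_in (subfield_q q) ((w ^ 2) ^ (q + 1))"
proof -
  have "(w ^ (q + 1)) ^ q = w ^ CARD('a) * w ^ q"
    by (simp add: assms power_mult[symmetric] power_add[symmetric] power2_eq_square algebra_simps)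
  also have "\<dots> = w ^ (q + 1)"
    by (simp add: power_card_eq_self mult.commute)
  finally have "w ^ (q + 1) \<in> subfield_q q"
    by (simp add: subfield_q_def)
  moreover have "(w ^ (q + 1)) ^ 2 = (w ^ 2) ^ (q + 1)"
    by (simp only: power_mult[symmetric] mult.commute)
  ultimately show ?thesis
    by (auto simp: nonsquare_in_def)
qed

lemma nonsquare_norm_power_half_card:
  fixes z :: "'a::{field,finite}"
  assumes "CARD('a) = q ^ 2" and "odd q"
    and "planar (\<lambda>x::'a. x ^ d)" and "d > 0"
    and "z \<noteq> 0" and "nonsquare_in (subfield_q q) (z ^ (q + 1))"
  shows "z ^ ((CARD('a) - 1) div 2) = -1"
proof -
  have odd_card: "odd CARD('a)"
    using assms(1,2) by simp
  have "z ^ ((CARD('a) - 1) div 2) \<noteq> 1"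
  proof
    assume "z ^ ((CARD('a) - 1) div 2) = 1"
    then obtain x where x: "x ^ d = z"
      using planar_power_range_iff[OF assms(3,4) odd_card assms(5)] by blast
    obtain k where "d = 2 * k"
      using planar_power_roots_of_unity(1)[OF assms(3,4)] by (rule evenE)
    then have "z = (x ^ k) ^ 2"
      using x by (simp add: power_mult[symmetric] mult.commute)
    then show False
      using assms(6) norm_of_square_not_nonsquare[OF assms(1)] by simp
  qed
  moreover have "(z ^ ((CARD('a) - 1) div 2)) ^ 2 = 1"
    using power_card_minus_one_eq_1[OF assms(5)] odd_card
    by (simp add: power_mult[symmetric] mult.commute)
  ultimately show ?thesis
    by (simp add: power2_eq_1_iff)
qed

lemma U_sets_equivalent:
  fixes \<theta> \<theta>' :: "'a::{field,finite}"
  assumes "CARD('a) = q ^ 2" and "odd q"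
    and "planar (\<lambda>x::'a. x ^ d)" and "d > 0"
    and "\<theta> \<noteq> 0" and "nonsquare_in (subfield_q q) (\<theta> ^ (q + 1))"
    and "\<theta>' \<noteq> 0" and "nonsquare_in (subfield_q q) (\<theta>' ^ (q + 1))"
  shows "\<exists>g. collineation (\<lambda>x::'a. x ^ d) g \<and> g ` U_set q \<theta> = U_set q \<theta>'"
proof -
  have "(\<theta>' / \<theta>) ^ ((CARD('a) - 1) div 2) = 1"
    using nonsquare_norm_power_half_card[OF assms(1-4)] assms(5-8) by (simp add: power_divide)
  then obtain c where c: "c ^ d = \<theta>' / \<theta>"
    using planar_power_range_iff[OF assms(3,4)] assms(1,2,5,7) by fastforce
  then have "c \<noteq> 0"
    using assms(4,5,7) by (auto simp: zero_power)
  moreover have "c ^ d * \<theta> = \<theta>'"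
    using c assms(5) by simp
  ultimately show ?thesis
    using gamma_collineation[OF id_field_aut] gamma_image_U_set by metis
qed

theorem proposition3p3:
  fixes p q n d :: nat
  assumes "prime p" and "odd p" and "n \<ge> 1" and "q = p ^ n"
    and "card (UNIV :: 'a::{field,finite} set) = q ^ 2"
    and "d > 0"
    and "planar (\<lambda>x::'a. x ^ d)"
  shows "(\<forall>c \<sigma>. c \<noteq> (0::'a) \<and> \<sigma> \<in> field_auts \<longrightarrow>
            collineation (\<lambda>x::'a. x ^ d) (gamma d c \<sigma>))
    \<and> id \<in> Gamma d
    \<and> (\<forall>g\<in>Gamma d. \<forall>h\<in>Gamma d. g \<circ> h \<in> (Gamma d :: ('a point \<Rightarrow> 'a point) set))
    \<and> (\<forall>g\<in>Gamma d. bij g \<and> inv g \<in> (Gamma d :: ('a point \<Rightarrow> 'a point) set))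
    \<and> (\<forall>\<theta> \<theta>'::'a. \<theta> \<noteq> 0 \<and> \<theta>' \<noteq> 0
         \<and> nonsquare_in (subfield_q q) (\<theta> ^ (q + 1))
         \<and> nonsquare_in (subfield_q q) (\<theta>' ^ (q + 1))
         \<longrightarrow> (\<exists>g. collineation (\<lambda>x::'a. x ^ d) g \<and> g ` U_set q \<theta> = U_set q \<theta>'))"
proof -
  have "odd q"
    using assms(2,4) by simp
  note U_sets = U_sets_equivalent[OF assms(5) this assms(7,6)]
  show ?thesis
    using gamma_collineation id_in_Gamma Gamma_comp_closed Gamma_inv_closed U_sets by blast
qed

end
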